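(* Let $k=\mathbb R$ or $\mathbb C$, let $(E,g)$ be a finite-dimensional inner product vector space over $k$, let $f\in\operatorname{End}_k(E)$, let $\mathcal H_f=\{H_1,\dots,H_n\}$ be $f$-invariant subspaces with $E=H_1\oplus\dots\oplus H_n$, and write $f_i=f|_{H_i}$. Then: (1) $\operatorname{Im} f=\operatorname{Im} f_1\oplus\dots\oplus\operatorname{Im} f_n$; (2) if $\mathcal H_f^\perp=[\operatorname{Im} f_1]_1^\perp\oplus\dots\oplus[\operatorname{Im} f_n]_n^\perp$, then $E=\operatorname{Im} f\oplus\mathcal H_f^\perp$; (3) $\operatorname{Ker} f=\operatorname{Ker} f_1\oplus\dots\oplus\operatorname{Ker} f_n$; (4) if $\widetilde{\mathcal H}_f^\perp=[\operatorname{Ker} f_1]_1^\perp\oplus\dots\oplus[\operatorname{Ker} f_n]_n^\perp$, then $E=\operatorname{Ker} f\oplus\widetilde{\mathcal H}_f^\perp$; (5) $f$ induces an isomorphism between $\widetilde{\mathcal H}_f^\perp$ and $\operatorname{Im} f$, and $f^+_{\mathcal H_f}(e)=(f|_{\widetilde{\mathcal H}_f^\perp})^{-1}(e)$ for $e\in\operatorname{Im} f$ and $f^+_{\mathcal H_f}(e)=0$ for $e\in\mathcal H_f^\perp$.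
   Context: An inner product is linear in the first argument, conjugate-symmetric and positive definite. For a subspace $W\subseteq H_i$, $[W]_i^\perp=\{v\in H_i:g(w,v)=0\ \forall w\in W\}$. For an endomorphism $h$ of a finite-dimensional inner product space $H$, its Moore-Penrose inverse $h^\dagger$ is the linear map equal to $(h|_{[\operatorname{Ker} h]^\perp})^{-1}$ on $\operatorname{Im} h$ and $0$ on $[\operatorname{Im} h]^\perp$ (orthogonal complements taken in $H$). $f^+_{\mathcal H_f}$ is the unique endomorphism of $E$ with $f^+_{\mathcal H_f}|_{H_i}=f_i^\dagger$ for each $i$, where $H_i$ carries the restricted inner product. *)

theory Defs
  imports Complex_Main
begin

text \<open>The scalar field k is an abstract field type 'k together with an embedding
  e : 'k \<Rightarrow> complex which is an injective field homomorphism whose image is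
  either all of the reals or all of the complex numbers; i.e. k = R or k = C.
  Conjugation on k is transported along e.\<close>

definition rc_embedding :: "('k::field \<Rightarrow> complex) \<Rightarrow> bool" where
  "rc_embedding e \<longleftrightarrow> inj e \<and> (\<forall>x y. e (x + y) = e x + e y) \<and>
     (\<forall>x y. e (x * y) = e x * e y) \<and> e 1 = 1 \<and>
     (range e = \<real> \<or> range e = UNIV)"

definition fin_dim_vs :: "('k::field \<Rightarrow> 'v::ab_group_add \<Rightarrow> 'v) \<Rightarrow> bool" where
  "fin_dim_vs scale \<longleftrightarrow> vector_space scale \<and>
     (\<exists>S. finite S \<and> module.span scale S = UNIV)"

definition inner_product ::
  "('k::field \<Rightarrow> 'v::ab_group_add \<Rightarrow> 'v) \<Rightarrow> ('k \<Rightarrow> complex) \<Rightarrow> ('v \<Rightarrow> 'v \<Rightarrow> 'k) \<Rightarrow> bool" where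
  "inner_product scale e g \<longleftrightarrow>
     (\<forall>x y z. g (x + y) z = g x z + g y z) \<and>
     (\<forall>a x z. g (scale a x) z = a * g x z) \<and>
     (\<forall>x y. e (g y x) = cnj (e (g x y))) \<and>
     (\<forall>x. x \<noteq> 0 \<longrightarrow> e (g x x) \<in> \<real> \<and> Re (e (g x x)) > 0)"

definition direct_sum :: "'i set \<Rightarrow> ('i \<Rightarrow> 'v::ab_group_add set) \<Rightarrow> 'v set \<Rightarrow> bool" where
  "direct_sum I W S \<longleftrightarrow>
     S = {(\<Sum>i\<in>I. v i) | v. \<forall>i\<in>I. v i \<in> W i} \<and>
     (\<forall>v. (\<forall>i\<in>I. v i \<in> W i) \<and> (\<Sum>i\<in>I. v i) = 0 \<longrightarrow> (\<forall>i\<in>I. v i = 0))"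

definition sum_of :: "'i set \<Rightarrow> ('i \<Rightarrow> 'v::ab_group_add set) \<Rightarrow> 'v set" where
  "sum_of I W = {(\<Sum>i\<in>I. v i) | v. \<forall>i\<in>I. v i \<in> W i}"

definition direct_sum2 :: "'v::ab_group_add set \<Rightarrow> 'v set \<Rightarrow> 'v set \<Rightarrow> bool" where
  "direct_sum2 A B S \<longleftrightarrow> S = {a + b | a b. a \<in> A \<and> b \<in> B} \<and> A \<inter> B \<subseteq> {0}"

definition orth_in :: "('v \<Rightarrow> 'v \<Rightarrow> 'k::zero) \<Rightarrow> 'v set \<Rightarrow> 'v set \<Rightarrow> 'v set" where
  "orth_in g H W = {v \<in> H. \<forall>w\<in>W. g w v = 0}"

definition ker_in :: "'v set \<Rightarrow> ('v \<Rightarrow> 'v::zero) \<Rightarrow> 'v set" where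
  "ker_in H h = {x \<in> H. h x = 0}"

text \<open>Moore-Penrose inverse of h|_H as an endomorphism of H (represented as a
  function on 'v which is 0 outside H): the linear map on H equal to
  (h|_{Ker^\<perp>})^{-1} on Im h and 0 on (Im h)^\<perp>, complements taken in H.\<close>
definition mp_inverse ::
  "('k::field \<Rightarrow> 'v::ab_group_add \<Rightarrow> 'v) \<Rightarrow> ('v \<Rightarrow> 'v \<Rightarrow> 'k) \<Rightarrow> 'v set \<Rightarrow> ('v \<Rightarrow> 'v) \<Rightarrow> ('v \<Rightarrow> 'v)" where
  "mp_inverse scale g H h = (THE q.
     (\<forall>x\<in>H. \<forall>y\<in>H. q (x + y) = q x + q y) \<and>
     (\<forall>a. \<forall>x\<in>H. q (scale a x) = scale a (q x)) \<and>
     (\<forall>y. y \<notin> H \<longrightarrow> q y = 0) \<and>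
     (\<forall>y\<in>h ` H. q y \<in> orth_in g H (ker_in H h) \<and> h (q y) = y) \<and>
     (\<forall>y\<in>orth_in g H (h ` H). q y = 0))"

definition mp_plus ::
  "('k::field \<Rightarrow> 'v::ab_group_add \<Rightarrow> 'v) \<Rightarrow> ('v \<Rightarrow> 'v \<Rightarrow> 'k) \<Rightarrow> ('v \<Rightarrow> 'v) \<Rightarrow> 'i set \<Rightarrow> ('i \<Rightarrow> 'v set) \<Rightarrow> ('v \<Rightarrow> 'v)" where
  "mp_plus scale g f I H = (THE p. Vector_Spaces.linear scale scale p \<and>
     (\<forall>i\<in>I. \<forall>x\<in>H i. p x = mp_inverse scale g (H i) f x))"

end

theory Submission
  imports Defs
begin

(* Invariance of the H_i makes f act componentwise, so Im f and Ker f are the sums of the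
   Im f_i and Ker f_i, and the complements [Im f_i]^perp and [Ker f_i]^perp taken inside the
   H_i add up to complements of Im f and Ker f in E.  That an orthogonal complement of a
   finite-dimensional subspace is a complement follows from Gram-Schmidt projection, which
   uses of g only its linearity in the first argument, the symmetry of orthogonality and
   anisotropy.

   Both f_i^dagger and f^+ are instances of one construction: if f is injective on X and Y
   is a complement of f(X) in V, then f x + b |-> x (x in X, b in Y) is linear on V, and it
   is the only additive map on V that inverts f on X and vanishes on Y.  Taking
   X = [Ker f_i]^perp, Y = [Im f_i]^perp gives f_i^dagger; taking their sums gives a linear
   map restricting to every f_i^dagger, i.e. f^+. *)

section \<open>Internal direct sums\<close>

lemma mem_sum_of_iff: "x \<in> sum_of I W \<longleftrightarrow> (\<exists>v. (\<forall>i\<in>I. v i \<in> W i) \<and> x = sum v I)"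
  unfolding sum_of_def by blast

lemma direct_sum_eq_sum_of: "direct_sum I H S \<Longrightarrow> S = sum_of I H"
  unfolding direct_sum_def sum_of_def by blast

lemma direct_sum_independent:
  assumes "direct_sum I H S" and "\<forall>i\<in>I. v i \<in> H i" and "sum v I = 0" and "i \<in> I"
  shows "v i = 0"
  using assms unfolding direct_sum_def by blast

lemma direct_sum_subfamily:
  assumes "direct_sum I H S" and "\<And>i. i \<in> I \<Longrightarrow> W i \<subseteq> H i"
  shows "direct_sum I W (sum_of I W)"
  using assms unfolding direct_sum_def sum_of_def by blast

lemma direct_sum2_decompose: "direct_sum2 A B S \<Longrightarrow> v \<in> S \<Longrightarrow> \<exists>a\<in>A. \<exists>b\<in>B. v = a + b"
  unfolding direct_sum2_def by blast

lemma direct_sum2_disjoint: "direct_sum2 A B S \<Longrightarrow> A \<inter> B \<subseteq> {0}"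
  unfolding direct_sum2_def by blast

lemma sum_of_pointwise_sum:
  assumes "\<And>i. i \<in> I \<Longrightarrow> H i = {a + b |a b. a \<in> A i \<and> b \<in> B i}"
  shows "sum_of I H = {a + b |a b. a \<in> sum_of I A \<and> b \<in> sum_of I B}"
proof (intro equalityI subsetI)
  fix x assume "x \<in> sum_of I H"
  then obtain v where v: "\<forall>i\<in>I. v i \<in> H i" "x = sum v I" unfolding mem_sum_of_iff by blast
  then have "\<forall>i\<in>I. \<exists>a. a \<in> A i \<and> (\<exists>b\<in>B i. v i = a + b)" using assms by blast
  from bchoice[OF this] obtain a where a: "\<forall>i\<in>I. a i \<in> A i \<and> (\<exists>b\<in>B i. v i = a i + b)"
    by blast
  then have "\<forall>i\<in>I. \<exists>b. b \<in> B i \<and> v i = a i + b" by blast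
  from bchoice[OF this] obtain b where b: "\<forall>i\<in>I. b i \<in> B i \<and> v i = a i + b i" by blast
  have "x = (\<Sum>i\<in>I. a i + b i)" using v(2) b by (auto intro: sum.cong)
  also have "\<dots> = sum a I + sum b I" by (rule sum.distrib)
  finally have "x = sum a I + sum b I" .
  moreover have "sum a I \<in> sum_of I A" "sum b I \<in> sum_of I B"
    using a b unfolding mem_sum_of_iff by blast+
  ultimately show "x \<in> {a + b |a b. a \<in> sum_of I A \<and> b \<in> sum_of I B}" by blast
next
  fix x assume "x \<in> {a + b |a b. a \<in> sum_of I A \<and> b \<in> sum_of I B}"
  then obtain a b where "\<forall>i\<in>I. a i \<in> A i" "\<forall>i\<in>I. b i \<in> B i" "x = sum a I + sum b I"
    unfolding mem_sum_of_iff by blast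
  moreover have "a i + b i \<in> H i" if "i \<in> I" "a i \<in> A i" "b i \<in> B i" for i
    using that assms by blast
  ultimately show "x \<in> sum_of I H" unfolding mem_sum_of_iff
    by (intro exI[of _ "\<lambda>i. a i + b i"]) (simp add: sum.distrib)
qed

context module
begin

lemma subspace_sum_of:
  assumes sub: "\<And>i. i \<in> I \<Longrightarrow> subspace (W i)"
  shows "subspace (sum_of I W)"
  unfolding subspace_def
proof (intro conjI ballI allI)
  show "0 \<in> sum_of I W"
    unfolding mem_sum_of_iff using sub subspace_0 by (intro exI[of _ "\<lambda>_. 0"]) auto
next
  fix x y assume "x \<in> sum_of I W" "y \<in> sum_of I W"
  then obtain v u where "\<forall>i\<in>I. v i \<in> W i" "x = sum v I" "\<forall>i\<in>I. u i \<in> W i" "y = sum u I"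
    unfolding mem_sum_of_iff by blast
  then show "x + y \<in> sum_of I W"
    unfolding mem_sum_of_iff using sub subspace_add
    by (intro exI[of _ "\<lambda>i. v i + u i"]) (auto simp: sum.distrib)
next
  fix c x assume "x \<in> sum_of I W"
  then obtain v where "\<forall>i\<in>I. v i \<in> W i" "x = sum v I" unfolding mem_sum_of_iff by blast
  then show "c *s x \<in> sum_of I W"
    unfolding mem_sum_of_iff using sub subspace_scale
    by (intro exI[of _ "\<lambda>i. c *s v i"]) (auto simp: scale_sum_right)
qed

lemma component_mem_sum_of:
  assumes "finite I" and "\<And>i. i \<in> I \<Longrightarrow> subspace (W i)" and "j \<in> I" and "x \<in> W j"
  shows "x \<in> sum_of I W"
  unfolding mem_sum_of_iff
proof (intro exI conjI)
  show "\<forall>i\<in>I. (if i = j then x else 0) \<in> W i" using assms subspace_0 by auto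
  show "x = (\<Sum>i\<in>I. if i = j then x else 0)" using assms(1,3) by (simp add: sum.delta)
qed

lemma direct_sum_components_unique:
  assumes ds: "direct_sum I H S" and sub: "\<And>i. i \<in> I \<Longrightarrow> subspace (H i)"
    and v: "\<forall>i\<in>I. v i \<in> H i" and u: "\<forall>i\<in>I. u i \<in> H i"
    and eq: "sum v I = sum u I" and i: "i \<in> I"
  shows "v i = u i"
proof -
  have "\<forall>i\<in>I. v i - u i \<in> H i" using v u sub subspace_diff by blast
  moreover have "(\<Sum>i\<in>I. v i - u i) = 0" using eq by (simp add: sum_subtractf)
  ultimately have "v i - u i = 0" by (rule direct_sum_independent[OF ds _ _ i])
  then show ?thesis by simp
qed

lemma direct_sum2_subset:
  assumes "direct_sum2 A B S" and "subspace A" and "subspace B"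
  shows "A \<subseteq> S" and "B \<subseteq> S"
  using assms subspace_0 unfolding direct_sum2_def by force+

lemma direct_sum2_sum_of:
  assumes ds: "direct_sum I H S" and sub: "\<And>i. i \<in> I \<Longrightarrow> subspace (H i)"
    and subA: "\<And>i. i \<in> I \<Longrightarrow> subspace (A i)" and subB: "\<And>i. i \<in> I \<Longrightarrow> subspace (B i)"
    and split: "\<And>i. i \<in> I \<Longrightarrow> direct_sum2 (A i) (B i) (H i)"
  shows "direct_sum2 (sum_of I A) (sum_of I B) S"
proof -
  have AH: "A i \<subseteq> H i" and BH: "B i \<subseteq> H i" if "i \<in> I" for i
    using direct_sum2_subset[OF split subA subB] that by blast+
  have "S = {a + b |a b. a \<in> sum_of I A \<and> b \<in> sum_of I B}"
    unfolding direct_sum_eq_sum_of[OF ds]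
    by (rule sum_of_pointwise_sum) (use split in \<open>simp add: direct_sum2_def\<close>)
  moreover have "sum_of I A \<inter> sum_of I B \<subseteq> {0}"
  proof
    fix x assume "x \<in> sum_of I A \<inter> sum_of I B"
    then obtain a b where a: "\<forall>i\<in>I. a i \<in> A i" "x = sum a I"
      and b: "\<forall>i\<in>I. b i \<in> B i" "x = sum b I" unfolding Int_iff mem_sum_of_iff by blast
    have "a i = b i" if "i \<in> I" for i
      using direct_sum_components_unique[OF ds sub _ _ _ that] a b AH BH by blast
    then have "a i \<in> A i \<inter> B i" if "i \<in> I" for i using a(1) b(1) that by auto
    then have "\<forall>i\<in>I. a i = 0"
      using direct_sum2_disjoint[OF split] by blast
    then show "x \<in> {0}" using a(2) by simp
  qed
  ultimately show ?thesis unfolding direct_sum2_def ..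
qed

end

context module_hom
begin

lemma image_sum_of: "f ` sum_of I W = sum_of I (\<lambda>i. f ` W i)"
proof (intro equalityI subsetI)
  fix y assume "y \<in> f ` sum_of I W"
  then obtain v where "\<forall>i\<in>I. v i \<in> W i" "y = f (sum v I)"
    by (auto simp: mem_sum_of_iff)
  then show "y \<in> sum_of I (\<lambda>i. f ` W i)"
    unfolding mem_sum_of_iff sum by (intro exI[of _ "\<lambda>i. f (v i)"]) blast
next
  fix y assume "y \<in> sum_of I (\<lambda>i. f ` W i)"
  then obtain w where "\<forall>i\<in>I. \<exists>x. x \<in> W i \<and> w i = f x" "y = sum w I"
    unfolding mem_sum_of_iff by blast
  moreover from bchoice[OF this(1)] obtain v where "\<forall>i\<in>I. v i \<in> W i \<and> w i = f (v i)" by blast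
  ultimately have "y = f (sum v I)" "sum v I \<in> sum_of I W"
    unfolding sum mem_sum_of_iff by (auto intro: sum.cong)
  then show "y \<in> f ` sum_of I W" by blast
qed

end

lemma ker_in_sum_of:
  assumes f: "module_hom s s f" and ds: "direct_sum I H S"
    and sub: "\<And>i. i \<in> I \<Longrightarrow> module.subspace s (H i)" and inv: "\<And>i. i \<in> I \<Longrightarrow> f ` H i \<subseteq> H i"
  shows "ker_in S f = sum_of I (\<lambda>i. ker_in (H i) f)"
proof -
  interpret module_hom s s f by (rule f)
  have S: "S = sum_of I H" using ds by (rule direct_sum_eq_sum_of)
  show ?thesis
  proof (intro equalityI subsetI)
    fix x assume "x \<in> ker_in S f"
    then obtain v where v: "\<forall>i\<in>I. v i \<in> H i" "x = sum v I" and fx: "f x = 0"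
      unfolding ker_in_def S mem_sum_of_iff by blast
    have "(\<Sum>i\<in>I. f (v i)) = (\<Sum>i\<in>I. 0)" using fx v(2) by (simp add: sum)
    then have "f (v i) = 0" if "i \<in> I" for i
      using m1.direct_sum_components_unique[OF ds sub, of "\<lambda>i. f (v i)" "\<lambda>_. 0" i]
        v(1) inv sub m1.subspace_0 that by blast
    then show "x \<in> sum_of I (\<lambda>i. ker_in (H i) f)"
      using v unfolding mem_sum_of_iff ker_in_def by blast
  next
    fix x assume "x \<in> sum_of I (\<lambda>i. ker_in (H i) f)"
    then obtain v where "\<forall>i\<in>I. v i \<in> H i \<and> f (v i) = 0" "x = sum v I"
      unfolding mem_sum_of_iff ker_in_def by blast
    then show "x \<in> ker_in S f" unfolding ker_in_def S mem_sum_of_iff by (auto simp: sum)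
  qed
qed

lemma module_hom_eq_on_sum_of:
  assumes p: "module_hom s1 s2 p" and q: "module_hom s1 s2 q"
    and eq: "\<And>i x. i \<in> I \<Longrightarrow> x \<in> W i \<Longrightarrow> p x = q x" and x: "x \<in> sum_of I W"
  shows "p x = q x"
proof -
  obtain v where v: "\<forall>i\<in>I. v i \<in> W i" "x = sum v I" using x unfolding mem_sum_of_iff by blast
  have "p x = (\<Sum>i\<in>I. p (v i))" unfolding v(2) by (rule module_hom.sum[OF p])
  also have "\<dots> = (\<Sum>i\<in>I. q (v i))" using v(1) eq by (simp cong: sum.cong)
  also have "\<dots> = q x" unfolding v(2) by (rule module_hom.sum[OF q, symmetric])
  finally show ?thesis .
qed

section \<open>Inverting a linear map along a complement of its image\<close>

definition split_inverse :: "('a \<Rightarrow> 'b::ab_group_add) \<Rightarrow> 'a set \<Rightarrow> 'b set \<Rightarrow> 'b \<Rightarrow> 'a" where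
  "split_inverse f X Y y = (THE x. x \<in> X \<and> (\<exists>b\<in>Y. y = f x + b))"

context module_hom
begin

lemma inj_on_ker_complement:
  assumes split: "direct_sum2 {v \<in> V. f v = 0} X V" and V: "m1.subspace V" and X: "m1.subspace X"
  shows "inj_on f X" and "f ` X = f ` V"
proof -
  have ker: "m1.subspace {v \<in> V. f v = 0}"
    using m1.subspace_inter[OF V subspace_kernel] by (simp add: Int_def)
  have XV: "X \<subseteq> V" using m1.direct_sum2_subset(2)[OF split ker X] .
  have disj: "{v \<in> V. f v = 0} \<inter> X \<subseteq> {0}" by (rule direct_sum2_disjoint[OF split])
  show "inj_on f X"
    unfolding inj_on_iff_eq_0[OF X] using XV disj by blast
  show "f ` X = f ` V"
  proof
    show "f ` V \<subseteq> f ` X"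
    proof
      fix y assume "y \<in> f ` V"
      then obtain v where "v \<in> V" "y = f v" by blast
      then obtain k x where "f k = 0" "x \<in> X" "y = f (k + x)"
        using direct_sum2_decompose[OF split] by blast
      then show "y \<in> f ` X" by (simp add: add)
    qed
  qed (use XV in blast)
qed

lemma split_inverse_apply:
  assumes X: "m1.subspace X" and Y: "m2.subspace Y" and inj: "inj_on f X"
    and disj: "f ` X \<inter> Y \<subseteq> {0}" and x: "x \<in> X" and b: "b \<in> Y"
  shows "split_inverse f X Y (f x + b) = x"
  unfolding split_inverse_def
proof (rule the_equality)
  show "x \<in> X \<and> (\<exists>b'\<in>Y. f x + b = f x + b')" using x b by blast
next
  fix x' assume "x' \<in> X \<and> (\<exists>b'\<in>Y. f x + b = f x' + b')"
  then obtain b' where x': "x' \<in> X" and b': "b' \<in> Y" and eq: "f x + b = f x' + b'" by blast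
  have "f (x' - x) = b - b'" using eq by (simp add: diff algebra_simps)
  moreover have "f (x' - x) \<in> f ` X" using x x' X m1.subspace_diff by blast
  moreover have "b - b' \<in> Y" using b b' Y m2.subspace_diff by blast
  ultimately have "f x' = f x" using disj by (auto simp: diff)
  then show "x' = x" using inj x x' by (auto dest: inj_onD)
qed

lemma split_inverse_linear_on:
  assumes X: "m1.subspace X" and Y: "m2.subspace Y" and inj: "inj_on f X"
    and split: "direct_sum2 (f ` X) Y V" and u: "u \<in> V" and v: "v \<in> V"
  shows "split_inverse f X Y (u + v) = split_inverse f X Y u + split_inverse f X Y v"
    and "split_inverse f X Y (c *b u) = c *a split_inverse f X Y u"
proof -
  have disj: "f ` X \<inter> Y \<subseteq> {0}" by (rule direct_sum2_disjoint[OF split])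
  note inv_apply = split_inverse_apply[OF X Y inj disj]
  obtain x b where x: "x \<in> X" and b: "b \<in> Y" and ux: "u = f x + b"
    using direct_sum2_decompose[OF split u] by blast
  obtain x' b' where x': "x' \<in> X" and b': "b' \<in> Y" and vx: "v = f x' + b'"
    using direct_sum2_decompose[OF split v] by blast
  have inv_u: "split_inverse f X Y u = x" unfolding ux using x b by (rule inv_apply)
  have inv_v: "split_inverse f X Y v = x'" unfolding vx using x' b' by (rule inv_apply)
  have "u + v = f (x + x') + (b + b')" using ux vx by (simp add: add algebra_simps)
  also have "split_inverse f X Y \<dots> = x + x'"
    using x x' b b' X Y by (intro inv_apply m1.subspace_add m2.subspace_add)
  finally show "split_inverse f X Y (u + v) = split_inverse f X Y u + split_inverse f X Y v"
    using inv_u inv_v by simp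
  have "c *b u = f (c *a x) + c *b b" using ux by (simp add: scale m2.scale_right_distrib)
  also have "split_inverse f X Y \<dots> = c *a x"
    using x b X Y by (intro inv_apply m1.subspace_scale m2.subspace_scale)
  finally show "split_inverse f X Y (c *b u) = c *a split_inverse f X Y u"
    using inv_u by simp
qed

lemma split_inverse_unique:
  assumes X: "m1.subspace X" and Y: "m2.subspace Y" and inj: "inj_on f X"
    and split: "direct_sum2 (f ` X) Y V"
    and add_q: "\<And>u v. u \<in> V \<Longrightarrow> v \<in> V \<Longrightarrow> q (u + v) = q u + q v"
    and left_inverse: "\<And>x. x \<in> X \<Longrightarrow> q (f x) = x"
    and vanish: "\<And>b. b \<in> Y \<Longrightarrow> q b = 0" and v: "v \<in> V"
  shows "q v = split_inverse f X Y v"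
proof -
  obtain x b where x: "x \<in> X" and b: "b \<in> Y" and vx: "v = f x + b"
    using direct_sum2_decompose[OF split v] by blast
  have "f x \<in> V" and "b \<in> V"
    using m2.direct_sum2_subset[OF split subspace_image[OF X] Y] x b by blast+
  then have "q v = x" unfolding vx using add_q left_inverse[OF x] vanish[OF b] by simp
  also have "x = split_inverse f X Y v"
    unfolding vx using split_inverse_apply[OF X Y inj direct_sum2_disjoint[OF split] x b] ..
  finally show ?thesis .
qed

end

section \<open>Orthogonal complements\<close>

locale reflexive_anisotropic_form = vector_space scale
  for scale :: "'k::field \<Rightarrow> 'v::ab_group_add \<Rightarrow> 'v" +
  fixes g :: "'v \<Rightarrow> 'v \<Rightarrow> 'k"
  assumes add_left: "g (x + y) z = g x z + g y z"
    and scale_left: "g (scale a x) z = a * g x z"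
    and orthogonal_sym: "g x y = 0 \<Longrightarrow> g y x = 0"
    and anisotropic: "g x x = 0 \<Longrightarrow> x = 0"
begin

lemma zero_left [simp]: "g 0 z = 0"
  using scale_left[of 0 0 z] by simp

lemma zero_right [simp]: "g z 0 = 0"
  using orthogonal_sym zero_left by blast

lemma diff_left: "g (x - y) z = g x z - g y z"
  using add_left[of "x - y" y z] by (simp add: algebra_simps)

lemma orthogonal_sym_iff: "g x y = 0 \<longleftrightarrow> g y x = 0"
  using orthogonal_sym by blast

lemma subspace_orth_in:
  assumes "subspace V" shows "subspace (orth_in g V W)"
proof -
  have "subspace {v. \<forall>w\<in>W. g v w = 0}"
    unfolding subspace_def by (simp add: add_left scale_left)
  then have "subspace (V \<inter> {v. \<forall>w\<in>W. g v w = 0})" using assms subspace_inter by blast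
  moreover have "orth_in g V W = V \<inter> {v. \<forall>w\<in>W. g v w = 0}"
    unfolding orth_in_def using orthogonal_sym_iff by blast
  ultimately show ?thesis by simp
qed

lemma orth_in_span: "orth_in g V (span S) = orth_in g V S"
proof (intro equalityI subsetI)
  fix v assume "v \<in> orth_in g V S"
  moreover have "subspace {w. g w v = 0}"
    unfolding subspace_def by (simp add: add_left scale_left)
  ultimately have "span S \<subseteq> {w. g w v = 0}"
    unfolding orth_in_def by (intro span_minimal) auto
  then show "v \<in> orth_in g V (span S)" using \<open>v \<in> orth_in g V S\<close> unfolding orth_in_def by blast
qed (auto simp: orth_in_def span_base)

lemma orth_projection_insert:
  assumes a: "a \<in> span S" "v - a \<in> orth_in g UNIV S"
    and s: "s \<in> span S" "w - s \<in> orth_in g UNIV S"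
  shows "\<exists>a'\<in>span (insert w S). v - a' \<in> orth_in g UNIV (insert w S)"
proof -
  have orth_S: "subspace (orth_in g UNIV S)" by (rule subspace_orth_in[OF subspace_UNIV])
  define u where "u = w - s"
  \<comment> \<open>If u = 0 the division by g u u = 0 makes c = 0 and the step trivial.\<close>
  define c where "c = g (v - a) u / g u u"
  define a' where "a' = a + scale c u"
  have "g (v - a') u = g (v - a) u - c * g u u"
    unfolding a'_def by (simp add: diff_left scale_left diff_diff_eq[symmetric])
  also have "\<dots> = 0"
    using anisotropic[of u] by (cases "g u u = 0") (auto simp: c_def)
  finally have "g u (v - a') = 0" by (rule orthogonal_sym)
  have "v - a' = (v - a) - scale c u" unfolding a'_def by simp
  also have "\<dots> \<in> orth_in g UNIV S"
    using orth_S a(2) subspace_scale[OF orth_S s(2)[folded u_def]] by (rule subspace_diff)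
  finally have "v - a' \<in> orth_in g UNIV S" .
  then have "g s (v - a') = 0" using s(1) orth_in_span unfolding orth_in_def by blast
  then have "g w (v - a') = 0" using \<open>g u (v - a') = 0\<close> unfolding u_def diff_left by simp
  then have "v - a' \<in> orth_in g UNIV (insert w S)"
    using \<open>v - a' \<in> orth_in g UNIV S\<close> unfolding orth_in_def by blast
  moreover have "a' \<in> span (insert w S)"
    unfolding a'_def u_def using a(1) s(1) span_mono[of S "insert w S"]
    by (intro span_add span_scale span_diff) (auto intro: span_base)
  ultimately show ?thesis by blast
qed

lemma exists_orth_projection:
  assumes "finite S" shows "\<exists>a\<in>span S. v - a \<in> orth_in g UNIV S"
  using assms
proof (induction S arbitrary: v rule: finite_induct)
  case empty
  then show ?case by (auto simp: orth_in_def)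
next
  case (insert w S)
  then show ?case using orth_projection_insert by metis
qed

lemma direct_sum2_orth_in_span:
  assumes S: "finite S" and V: "subspace V" and SV: "span S \<subseteq> V"
  shows "direct_sum2 (span S) (orth_in g V (span S)) V"
  unfolding direct_sum2_def
proof
  show "V = {a + b |a b. a \<in> span S \<and> b \<in> orth_in g V (span S)}"
  proof (intro equalityI subsetI)
    fix v assume "v \<in> V"
    obtain a where a: "a \<in> span S" "v - a \<in> orth_in g UNIV S"
      using exists_orth_projection[OF S] by blast
    then have "v - a \<in> orth_in g V (span S)"
      using \<open>v \<in> V\<close> SV V subspace_diff unfolding orth_in_span by (auto simp: orth_in_def)
    then show "v \<in> {a + b |a b. a \<in> span S \<and> b \<in> orth_in g V (span S)}"
      using a(1) by force
  next
    fix v assume "v \<in> {a + b |a b. a \<in> span S \<and> b \<in> orth_in g V (span S)}"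
    then show "v \<in> V" using SV V subspace_add unfolding orth_in_def by blast
  qed
  show "span S \<inter> orth_in g V (span S) \<subseteq> {0}"
    using anisotropic unfolding orth_in_def by blast
qed

end

lemma reflexive_anisotropic_form_if_inner_product:
  assumes e: "rc_embedding e" and V: "vector_space scale" and g: "inner_product scale e g"
  shows "reflexive_anisotropic_form scale g"
proof -
  have "inj e" and "e (0 + 0) = e 0 + e 0" using e unfolding rc_embedding_def by blast+
  then have e_eq_0: "e x = 0 \<longleftrightarrow> x = 0" for x
    using injD[OF \<open>inj e\<close>, of x 0] by auto
  then have e0: "e 0 = 0" by simp
  show ?thesis
  proof (rule reflexive_anisotropic_form.intro[OF V], unfold_locales)
    fix x y z a
    show "g (x + y) z = g x z + g y z" and "g (scale a x) z = a * g x z"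
      using g unfolding inner_product_def by blast+
    show "g y x = 0" if "g x y = 0"
    proof -
      have "e (g y x) = cnj (e (g x y))" using g unfolding inner_product_def by blast
      then show ?thesis using that e0 e_eq_0 by simp
    qed
    show "x = 0" if "g x x = 0"
    proof (rule ccontr)
      assume "x \<noteq> 0"
      then have "Re (e (g x x)) > 0" using g unfolding inner_product_def by blast
      then show False using that e0 by simp
    qed
  qed
qed

context vector_space
begin

lemma subspace_finite_span:
  assumes "finite T" and "span T = UNIV" and "subspace W"
  obtains S where "finite S" and "span S = W"
proof -
  obtain B where B: "B \<subseteq> W" "independent B" "W \<subseteq> span B" by (rule basis_exists)
  have "finite B" using independent_span_bound[OF assms(1) B(2)] assms(2) by simp
  moreover have "span B = W" using B span_minimal[OF B(1) assms(3)] by blast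
  ultimately show thesis by (rule that)
qed

end

section \<open>Moore--Penrose inverses\<close>

context reflexive_anisotropic_form
begin

lemma mp_inverse_eq_split_inverse:
  assumes f: "module_hom scale scale f" and V: "subspace V" and inv: "f ` V \<subseteq> V"
    and ker_split: "direct_sum2 (ker_in V f) (orth_in g V (ker_in V f)) V"
    and im_split: "direct_sum2 (f ` V) (orth_in g V (f ` V)) V"
  shows "mp_inverse scale g V f =
    (\<lambda>y. if y \<in> V then split_inverse f (orth_in g V (ker_in V f)) (orth_in g V (f ` V)) y else 0)"
    (is "_ = ?q")
proof -
  interpret module_hom scale scale f by (rule f)
  let ?K = "orth_in g V (ker_in V f)" and ?P = "orth_in g V (f ` V)"
  have K: "subspace ?K" and P: "subspace ?P" using V by (rule subspace_orth_in)+
  have "direct_sum2 {v \<in> V. f v = 0} ?K V" using ker_split unfolding ker_in_def .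
  then have inj: "inj_on f ?K" and img: "f ` ?K = f ` V"
    using inj_on_ker_complement[OF _ V K] by blast+
  have split: "direct_sum2 (f ` ?K) ?P V" using im_split unfolding img .
  have KV: "?K \<subseteq> V" and PV: "?P \<subseteq> V" unfolding orth_in_def by blast+
  note inv_apply = split_inverse_apply[OF K P inj direct_sum2_disjoint[OF split]]
  note inv_linear = split_inverse_linear_on[OF K P inj split]
  show ?thesis
    unfolding mp_inverse_def
  proof (rule the_equality; (intro conjI ballI allI impI)?)
    show "?q (x + y) = ?q x + ?q y" if "x \<in> V" "y \<in> V" for x y
      using that inv_linear(1) V subspace_add by simp
    show "?q (scale a x) = scale a (?q x)" if "x \<in> V" for a x
      using that inv_linear(2) V subspace_scale by simp
    show "?q y = 0" if "y \<notin> V" for y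
      using that by simp
    show "?q y \<in> ?K" "f (?q y) = y" if "y \<in> f ` V" for y
    proof -
      obtain x where x: "x \<in> ?K" "y = f x" using \<open>y \<in> f ` V\<close> img by blast
      then have "?q y = x" using inv_apply[OF x(1) subspace_0[OF P]] KV inv by auto
      then show "?q y \<in> ?K" "f (?q y) = y" using x by simp_all
    qed
    show "?q y = 0" if "y \<in> ?P" for y
      using that inv_apply[OF subspace_0[OF K] that] PV by auto
  next
    fix q' assume q': "(\<forall>x\<in>V. \<forall>y\<in>V. q' (x + y) = q' x + q' y) \<and>
      (\<forall>a. \<forall>x\<in>V. q' (scale a x) = scale a (q' x)) \<and>
      (\<forall>y. y \<notin> V \<longrightarrow> q' y = 0) \<and>
      (\<forall>y\<in>f ` V. q' y \<in> ?K \<and> f (q' y) = y) \<and> (\<forall>y\<in>?P. q' y = 0)"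
    have "q' (f x) = x" if "x \<in> ?K" for x
      using q' that KV inj_onD[OF inj] by blast
    then have "q' y = split_inverse f ?K ?P y" if "y \<in> V" for y
      using split_inverse_unique[OF K P inj split] q' that by blast
    then show "q' = ?q" using q' by auto
  qed
qed

end

section \<open>Endomorphisms preserving a direct sum decomposition\<close>

locale invariant_decomposition = reflexive_anisotropic_form scale g
  for scale :: "'k::field \<Rightarrow> 'v::ab_group_add \<Rightarrow> 'v" and g +
  fixes f :: "'v \<Rightarrow> 'v" and I :: "'i set" and H :: "'i \<Rightarrow> 'v set"
  assumes finite_dimensional: "\<exists>T. finite T \<and> span T = UNIV"
    and linear: "module_hom scale scale f"
    and finite_I: "finite I"
    and subspace_H: "i \<in> I \<Longrightarrow> subspace (H i)"
    and invariant_H: "i \<in> I \<Longrightarrow> f ` H i \<subseteq> H i"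
    and direct_sum_H: "direct_sum I H UNIV"
begin

sublocale lin: module_hom scale scale f by (rule linear)

(* ker_perp i and im_perp i are the paper's [Ker f_i]_i^perp and [Im f_i]_i^perp;
   Ker_perp and Im_perp are its \tilde H_f^perp and H_f^perp. *)
abbreviation ker_perp :: "'i \<Rightarrow> 'v set" where
  "ker_perp i \<equiv> orth_in g (H i) (ker_in (H i) f)"

abbreviation im_perp :: "'i \<Rightarrow> 'v set" where
  "im_perp i \<equiv> orth_in g (H i) (f ` H i)"

abbreviation Ker_perp :: "'v set" where
  "Ker_perp \<equiv> sum_of I ker_perp"

abbreviation Im_perp :: "'v set" where
  "Im_perp \<equiv> sum_of I im_perp"

lemma direct_sum2_orth_in:
  assumes "subspace W" and "subspace V" and "W \<subseteq> V"
  shows "direct_sum2 W (orth_in g V W) V"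
proof -
  obtain T where "finite T" "span T = UNIV" using finite_dimensional by blast
  then obtain S where "finite S" "span S = W" using subspace_finite_span assms(1) by blast
  then show ?thesis using direct_sum2_orth_in_span assms(2,3) by blast
qed

lemma subspace_ker_in: "subspace V \<Longrightarrow> subspace (ker_in V f)"
  unfolding ker_in_def using subspace_inter[OF _ lin.subspace_kernel] by (simp add: Int_def)

lemma subspace_ker_perp: "i \<in> I \<Longrightarrow> subspace (ker_perp i)"
  and subspace_im_perp: "i \<in> I \<Longrightarrow> subspace (im_perp i)"
  using subspace_H by (simp_all add: subspace_orth_in)

lemma subspace_Ker_perp: "subspace Ker_perp" and subspace_Im_perp: "subspace Im_perp"
  using subspace_ker_perp subspace_im_perp by (simp_all add: subspace_sum_of)

lemma direct_sum2_ker_perp: "i \<in> I \<Longrightarrow> direct_sum2 (ker_in (H i) f) (ker_perp i) (H i)"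
  using subspace_H subspace_ker_in by (intro direct_sum2_orth_in) (auto simp: ker_in_def)

lemma direct_sum2_im_perp: "i \<in> I \<Longrightarrow> direct_sum2 (f ` H i) (im_perp i) (H i)"
  using subspace_H invariant_H lin.subspace_image by (intro direct_sum2_orth_in) auto

lemma
  assumes i: "i \<in> I"
  shows inj_on_ker_perp: "inj_on f (ker_perp i)" and image_ker_perp: "f ` ker_perp i = f ` H i"
proof -
  have "direct_sum2 {v \<in> H i. f v = 0} (ker_perp i) (H i)"
    using direct_sum2_ker_perp[OF i] by (simp only: ker_in_def)
  note complement = lin.inj_on_ker_complement[OF this subspace_H[OF i] subspace_orth_in[OF subspace_H[OF i]]]
  show "inj_on f (ker_perp i)" by (rule complement(1))
  show "f ` ker_perp i = f ` H i" by (rule complement(2))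
qed

lemma decompose_H:
  assumes "i \<in> I" and "y \<in> H i"
  obtains x b where "x \<in> ker_perp i" and "b \<in> im_perp i" and "y = f x + b"
proof -
  obtain a b where a: "a \<in> f ` H i" and "b \<in> im_perp i" "y = a + b"
    using direct_sum2_decompose[OF direct_sum2_im_perp[OF assms(1)] assms(2)] by blast
  moreover obtain x where "x \<in> ker_perp i" "a = f x"
    using a unfolding image_ker_perp[OF assms(1), symmetric] by blast
  ultimately show thesis using that[of x b] by simp
qed

lemma mp_inverse_H_apply:
  assumes i: "i \<in> I" and x: "x \<in> ker_perp i" and b: "b \<in> im_perp i"
  shows "mp_inverse scale g (H i) f (f x + b) = x"
proof -
  have "f x + b \<in> H i"
    using i x b subspace_H invariant_H subspace_add unfolding orth_in_def by blast
  moreover have "split_inverse f (ker_perp i) (im_perp i) (f x + b) = x"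
    using lin.split_inverse_apply[OF subspace_orth_in[OF subspace_H[OF i]]
        subspace_orth_in[OF subspace_H[OF i]] inj_on_ker_perp[OF i] _ x b]
      direct_sum2_disjoint[OF direct_sum2_im_perp[OF i]] image_ker_perp[OF i] by simp
  ultimately show ?thesis
    using mp_inverse_eq_split_inverse[OF linear subspace_H invariant_H direct_sum2_ker_perp direct_sum2_im_perp] i
    by simp
qed

lemma range_eq_sum_of: "range f = sum_of I (\<lambda>i. f ` H i)"
  using direct_sum_eq_sum_of[OF direct_sum_H] lin.image_sum_of by metis

lemma kernel_eq_sum_of: "{x. f x = 0} = sum_of I (\<lambda>i. ker_in (H i) f)"
  using ker_in_sum_of[OF linear direct_sum_H subspace_H invariant_H] by (simp add: ker_in_def)

lemma direct_sum2_Im_perp: "direct_sum2 (range f) Im_perp UNIV"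
  unfolding range_eq_sum_of
  using direct_sum_H subspace_H lin.subspace_image subspace_orth_in direct_sum2_im_perp
  by (intro direct_sum2_sum_of) auto

lemma direct_sum2_Ker_perp: "direct_sum2 {x. f x = 0} Ker_perp UNIV"
  unfolding kernel_eq_sum_of
  using direct_sum_H subspace_H subspace_ker_in subspace_orth_in direct_sum2_ker_perp
  by (intro direct_sum2_sum_of) auto

lemma inj_on_Ker_perp: "inj_on f Ker_perp" and image_Ker_perp: "f ` Ker_perp = range f"
  using lin.inj_on_ker_complement[OF _ subspace_UNIV subspace_Ker_perp] direct_sum2_Ker_perp
  by simp_all

lemma split_inverse_Ker_perp_apply:
  "x \<in> Ker_perp \<Longrightarrow> b \<in> Im_perp \<Longrightarrow> split_inverse f Ker_perp Im_perp (f x + b) = x"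
  using lin.split_inverse_apply[OF subspace_Ker_perp subspace_Im_perp inj_on_Ker_perp]
    direct_sum2_disjoint[OF direct_sum2_Im_perp] image_Ker_perp by simp

lemma linear_split_inverse_Ker_perp: "Vector_Spaces.linear scale scale (split_inverse f Ker_perp Im_perp)"
proof -
  have "direct_sum2 (f ` Ker_perp) Im_perp UNIV"
    using direct_sum2_Im_perp unfolding image_Ker_perp .
  then show ?thesis
    unfolding Vector_Spaces.linear_iff
    using lin.split_inverse_linear_on[OF subspace_Ker_perp subspace_Im_perp inj_on_Ker_perp]
    by (simp add: vector_space_axioms)
qed

lemma split_inverse_Ker_perp_on_H:
  assumes i: "i \<in> I" and y: "y \<in> H i"
  shows "split_inverse f Ker_perp Im_perp y = mp_inverse scale g (H i) f y"
proof -
  obtain x b where x: "x \<in> ker_perp i" and b: "b \<in> im_perp i" and y: "y = f x + b"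
    using decompose_H[OF i y] .
  have "x \<in> Ker_perp"
    by (rule component_mem_sum_of[where W = ker_perp, OF finite_I _ i x]) (rule subspace_ker_perp)
  moreover have "b \<in> Im_perp"
    by (rule component_mem_sum_of[where W = im_perp, OF finite_I _ i b]) (rule subspace_im_perp)
  ultimately show ?thesis
    unfolding y using split_inverse_Ker_perp_apply mp_inverse_H_apply[OF i x b] by simp
qed

lemma mp_plus_eq_split_inverse: "mp_plus scale g f I H = split_inverse f Ker_perp Im_perp"
  unfolding mp_plus_def
proof (rule the_equality)
  show "Vector_Spaces.linear scale scale (split_inverse f Ker_perp Im_perp) \<and>
    (\<forall>i\<in>I. \<forall>x\<in>H i. split_inverse f Ker_perp Im_perp x = mp_inverse scale g (H i) f x)"
    using linear_split_inverse_Ker_perp split_inverse_Ker_perp_on_H by simp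
next
  fix p assume p: "Vector_Spaces.linear scale scale p \<and>
    (\<forall>i\<in>I. \<forall>x\<in>H i. p x = mp_inverse scale g (H i) f x)"
  show "p = split_inverse f Ker_perp Im_perp"
  proof
    fix y
    have "module_hom scale scale p" and "module_hom scale scale (split_inverse f Ker_perp Im_perp)"
      using p linear_split_inverse_Ker_perp by (simp_all add: module_hom_iff_linear)
    moreover have "p x = split_inverse f Ker_perp Im_perp x" if "i \<in> I" and "x \<in> H i" for i x
      using p split_inverse_Ker_perp_on_H that by simp
    moreover have "y \<in> sum_of I H" using direct_sum_eq_sum_of[OF direct_sum_H] by blast
    ultimately show "p y = split_inverse f Ker_perp Im_perp y" by (rule module_hom_eq_on_sum_of)
  qed
qed

lemma mp_plus_on_range:
  assumes "y \<in> range f" shows "mp_plus scale g f I H y = the_inv_into Ker_perp f y"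
proof -
  obtain x where x: "x \<in> Ker_perp" and y: "y = f x" using assms image_Ker_perp by blast
  show ?thesis
    unfolding mp_plus_eq_split_inverse y
    using split_inverse_Ker_perp_apply[OF x subspace_0[OF subspace_Im_perp]]
      the_inv_into_f_f[OF inj_on_Ker_perp x] by simp
qed

lemma mp_plus_on_Im_perp: "y \<in> Im_perp \<Longrightarrow> mp_plus scale g f I H y = 0"
  using split_inverse_Ker_perp_apply[OF subspace_0[OF subspace_Ker_perp]]
  unfolding mp_plus_eq_split_inverse by simp

end

theorem lemma3p3:
  fixes scale :: "'k::field \<Rightarrow> 'v::ab_group_add \<Rightarrow> 'v"
    and e :: "'k \<Rightarrow> complex"
    and g :: "'v \<Rightarrow> 'v \<Rightarrow> 'k"
    and f :: "'v \<Rightarrow> 'v"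
    and H :: "nat \<Rightarrow> 'v set"
    and n :: nat
  assumes k: "rc_embedding e"
    and E: "fin_dim_vs scale"
    and g: "inner_product scale e g"
    and f: "Vector_Spaces.linear scale scale f"
    and Hsub: "\<forall>i\<in>{1..n}. module.subspace scale (H i)"
    and Hinv: "\<forall>i\<in>{1..n}. f ` H i \<subseteq> H i"
    and Hsum: "direct_sum {1..n} H UNIV"
  shows
    "direct_sum {1..n} (\<lambda>i. f ` H i) (range f)
     \<and> (let Hp = sum_of {1..n} (\<lambda>i. orth_in g (H i) (f ` H i)) in
          direct_sum {1..n} (\<lambda>i. orth_in g (H i) (f ` H i)) Hp
          \<and> direct_sum2 (range f) Hp UNIV)
     \<and> direct_sum {1..n} (\<lambda>i. ker_in (H i) f) {x. f x = 0}
     \<and> (let Kp = sum_of {1..n} (\<lambda>i. orth_in g (H i) (ker_in (H i) f)) in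
          direct_sum {1..n} (\<lambda>i. orth_in g (H i) (ker_in (H i) f)) Kp
          \<and> direct_sum2 {x. f x = 0} Kp UNIV)
     \<and> (let Hp = sum_of {1..n} (\<lambda>i. orth_in g (H i) (f ` H i));
            Kp = sum_of {1..n} (\<lambda>i. orth_in g (H i) (ker_in (H i) f)) in
          bij_betw f Kp (range f)
          \<and> (\<forall>y\<in>range f. mp_plus scale g f {1..n} H y = the_inv_into Kp f y)
          \<and> (\<forall>y\<in>Hp. mp_plus scale g f {1..n} H y = 0))"
proof -
  have V: "vector_space scale" using E unfolding fin_dim_vs_def by blast
  interpret invariant_decomposition scale g f "{1..n}" H
  proof (rule invariant_decomposition.intro)
    show "reflexive_anisotropic_form scale g"
      using k V g by (rule reflexive_anisotropic_form_if_inner_product)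
    show "invariant_decomposition_axioms scale f {1..n} H"
      unfolding invariant_decomposition_axioms_def
      using E f Hsub Hinv Hsum by (simp add: fin_dim_vs_def module_hom_iff_linear)
  qed
  have "direct_sum {1..n} (\<lambda>i. f ` H i) (range f)"
    unfolding range_eq_sum_of using direct_sum_H invariant_H by (rule direct_sum_subfamily)
  moreover have "direct_sum {1..n} (\<lambda>i. ker_in (H i) f) {x. f x = 0}"
    unfolding kernel_eq_sum_of using direct_sum_H by (rule direct_sum_subfamily) (simp add: ker_in_def)
  moreover have "direct_sum {1..n} im_perp Im_perp" and "direct_sum {1..n} ker_perp Ker_perp"
    using direct_sum_H by (rule direct_sum_subfamily, simp add: orth_in_def subset_iff)+
  ultimately show ?thesis
    unfolding Let_def bij_betw_def
    using direct_sum2_Im_perp direct_sum2_Ker_perp inj_on_Ker_perp image_Ker_perp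
      mp_plus_on_range mp_plus_on_Im_perp by blast
qed

end
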